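(* Let $\Gamma$ be an inhomogeneous $Y$-semigroup such that $Y_1 \subseteq \mathcal{D}(A_\Gamma)$ and $\Gamma$ is $Y$-strongly $t$-continuous. Assume also that $A_\Gamma(t) \in \mathcal{B}(Y_1,Y)$ for all $t \in J$ and that for all $(s,t) \in \Delta_J$ the map $u \mapsto \|A_\Gamma(u)\|_{\mathcal{B}(Y_1,Y)}$ belongs to $L^1([s,t])$. Then for all $f \in Y_1$ and $(s,t) \in \Delta_J$, \[ \Gamma(s,t)f-f=\int_s^t \Gamma(s,u) A_\Gamma(u) f\,du \] (Bochner integral in $Y$).
   Context: Let $(Y,\|\cdot\|)$ be a real separable Banach space and $(Y_1,\|\cdot\|_{Y_1})$ a real separable Banach space continuously embedded in $Y$. $\mathcal B(Y)$, $\mathcal B(Y_1,Y)$ denote bounded linear operators. $J$ is either $\mathbb{R}^+$ or $[0,T_\infty]$ ($T_\infty>0$), $\Delta_J=\{(s,t)\in J^2:s\le t\}$, $J(s)=\{t\in J:t\ge s\}$. An inhomogeneous $Y$-semigroup is a map $\Gamma:\Delta_J\to\mathcal B(Y)$ with $\Gamma(t,t)=I$ and $\Gamma(s,r)\Gamma(r,t)=\Gamma(s,t)$ for $s\le r\le t$ in $J$. Generator: for $t\in J$, $\mathcal D(A_\Gamma(t))$ is the set of $f\in Y$ such that $\lim_{h\downarrow0,\,t+h\in J}h^{-1}(\Gamma(t,t+h)-I)f$ and $\lim_{h\downarrow0,\,t-h\in J}h^{-1}(\Gamma(t-h,t)-I)f$ exist in $Y$ and are equal, $A_\Gamma(t)f$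 denoting the common value; $\mathcal D(A_\Gamma)=\bigcap_{t\in J}\mathcal D(A_\Gamma(t))$. $\Gamma$ is $Y$-strongly $t$-continuous if for every $f\in Y$, $s\in J$, $u\mapsto\Gamma(s,u)f$ is continuous from $J(s)$ into $(Y,\|\cdot\|)$. *)

theory Defs
  imports "HOL-Analysis.Analysis"
begin

definition admissible_J :: "real set \<Rightarrow> bool" where
  "admissible_J J \<longleftrightarrow> J = {0..} \<or> (\<exists>T>0. J = {0..T})"

text \<open>Inhomogeneous Y-semigroup on Delta_J (values outside Delta_J are irrelevant).\<close>
definition inhom_semigroup :: "real set \<Rightarrow> (real \<Rightarrow> real \<Rightarrow> 'y::real_normed_vector \<Rightarrow>\<^sub>L 'y) \<Rightarrow> bool" where
  "inhom_semigroup J \<Gamma> \<longleftrightarrow>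
     (\<forall>t\<in>J. \<Gamma> t t = id_blinfun) \<and>
     (\<forall>s\<in>J. \<forall>r\<in>J. \<forall>t\<in>J. s \<le> r \<and> r \<le> t \<longrightarrow> \<Gamma> s r o\<^sub>L \<Gamma> r t = \<Gamma> s t)"

definition gen_limit :: "real set \<Rightarrow> (real \<Rightarrow> real \<Rightarrow> 'y::real_normed_vector \<Rightarrow>\<^sub>L 'y) \<Rightarrow> real \<Rightarrow> 'y \<Rightarrow> 'y \<Rightarrow> bool" where
  "gen_limit J \<Gamma> t f L \<longleftrightarrow>
     ((\<lambda>h. (1 / h) *\<^sub>R (blinfun_apply (\<Gamma> t (t + h)) f - f)) \<longlongrightarrow> L) (at 0 within {h. 0 < h \<and> t + h \<in> J}) \<and>
     ((\<lambda>h. (1 / h) *\<^sub>R (blinfun_apply (\<Gamma> (t - h) t) f - f)) \<longlongrightarrow> L) (at 0 within {h. 0 < h \<and> t - h \<in> J})"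

definition gen_dom :: "real set \<Rightarrow> (real \<Rightarrow> real \<Rightarrow> 'y::real_normed_vector \<Rightarrow>\<^sub>L 'y) \<Rightarrow> real \<Rightarrow> 'y set" where
  "gen_dom J \<Gamma> t = {f. \<exists>L. gen_limit J \<Gamma> t f L}"

text \<open>Generator A_Gamma(t) f (meaningful for f in gen_dom J Gamma t).\<close>
definition gen :: "real set \<Rightarrow> (real \<Rightarrow> real \<Rightarrow> 'y::real_normed_vector \<Rightarrow>\<^sub>L 'y) \<Rightarrow> real \<Rightarrow> 'y \<Rightarrow> 'y" where
  "gen J \<Gamma> t f = (SOME L. gen_limit J \<Gamma> t f L)"

definition gen_dom_all :: "real set \<Rightarrow> (real \<Rightarrow> real \<Rightarrow> 'y::real_normed_vector \<Rightarrow>\<^sub>L 'y) \<Rightarrow> 'y set" where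
  "gen_dom_all J \<Gamma> = (\<Inter>t\<in>J. gen_dom J \<Gamma> t)"

definition strongly_t_continuous :: "real set \<Rightarrow> (real \<Rightarrow> real \<Rightarrow> 'y::real_normed_vector \<Rightarrow>\<^sub>L 'y) \<Rightarrow> bool" where
  "strongly_t_continuous J \<Gamma> \<longleftrightarrow>
     (\<forall>f. \<forall>s\<in>J. continuous_on {u\<in>J. s \<le> u} (\<lambda>u. blinfun_apply (\<Gamma> s u) f))"

end

theory Submission
  imports Defs
begin

(* For f in Y_1 the orbit u |-> Gamma(s,u) f is differentiable on [s,t] with derivative
   Gamma(s,u) A(u) f. From the right this is the generator limit pushed through
   Gamma(s,u+h) = Gamma(s,u) Gamma(u,u+h). From the left, Gamma(s,u-h) f - Gamma(s,u) f equals
   Gamma(s,u-h) applied to -(Gamma(u-h,u) f - f); since Gamma(s,.) is strongly continuous and,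
   by the uniform boundedness principle, norm-bounded on [s,t], the left quotient converges too.
   The derivative is measurable (a pointwise limit of continuous difference quotients) and is
   dominated by sup ||Gamma(s,.)|| * ||A(u)||_{B(Y_1,Y)} * ||f||_{Y_1}, hence Bochner integrable.
   The Henstock-Kurzweil fundamental theorem of calculus then gives the formula, because the
   Henstock-Kurzweil and Bochner integrals agree on Bochner integrable functions. *)
lemma simple_function_has_integral_lborel:
  fixes s :: "real \<Rightarrow> 'b::{banach, second_countable_topology}"
  assumes "simple_function lborel s" "emeasure lborel {y \<in> space lborel. s y \<noteq> 0} \<noteq> \<infinity>"
  shows "(s has_integral integral\<^sup>L lborel s) UNIV"
  using assms
proof (induct rule: integrable_simple_function_induct)
  case (cong f g)
  then have "f = g" by auto
  with cong show ?case by simp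
next
  case (indicator A y)
  then have "integrable lborel (indicator A :: real \<Rightarrow> real)"
    by (intro integrable_real_indicator) auto
  then show ?case
    using has_integral_scaleR_left[OF has_integral_integral_lborel, of "indicator A" y]
    by simp
next
  case (add f g)
  then have "integrable lborel f" "integrable lborel g"
    by (auto intro: integrable_simple_function)
  with add.hyps(6,7) show ?case
    by (simp add: has_integral_add)
qed

lemma integrable_simple_function_approximation:
  fixes f :: "'a \<Rightarrow> 'b::{banach, second_countable_topology}"
  assumes f: "integrable M f"
  obtains s where "\<And>i. simple_function M (s i)"
    and "\<And>i. emeasure M {y \<in> space M. s i y \<noteq> 0} \<noteq> \<infinity>"
    and "(\<lambda>i. \<integral>x. norm (f x - s i x) \<partial>M) \<longlonglongrightarrow> 0"
proof -
  obtain s where simple: "\<And>i. simple_function M (s i)"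
      and fin: "\<And>i. emeasure M {y \<in> space M. s i y \<noteq> 0} \<noteq> \<infinity>"
      and lim: "\<And>x. x \<in> space M \<Longrightarrow> (\<lambda>i. s i x) \<longlonglongrightarrow> f x"
      and bound: "\<And>x i. x \<in> space M \<Longrightarrow> norm (s i x) \<le> 2 * norm (f x)"
    using integrable_implies_simple_function_sequence[OF f] by blast
  have "(\<lambda>i. \<integral>x. norm (f x - s i x) \<partial>M) \<longlonglongrightarrow> (\<integral>x. 0 \<partial>M)"
  proof (rule integral_dominated_convergence[where w="\<lambda>x. 3 * norm (f x)"])
    show "(\<lambda>x. norm (f x - s i x)) \<in> borel_measurable M" for i
      using borel_measurable_integrable[OF integrable_simple_function[OF simple fin]]
        borel_measurable_integrable[OF f] by measurable
    show "AE x in M. (\<lambda>i. norm (f x - s i x)) \<longlonglongrightarrow> 0"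
    proof (rule AE_I2)
      fix x assume "x \<in> space M"
      then have "(\<lambda>i. f x - s i x) \<longlonglongrightarrow> f x - f x"
        using lim by (intro tendsto_diff tendsto_const)
      then show "(\<lambda>i. norm (f x - s i x)) \<longlonglongrightarrow> 0"
        by (simp add: tendsto_norm_zero)
    qed
    show "AE x in M. norm (norm (f x - s i x)) \<le> 3 * norm (f x)" for i
    proof (rule AE_I2)
      fix x assume "x \<in> space M"
      then show "norm (norm (f x - s i x)) \<le> 3 * norm (f x)"
        using bound[of x i] norm_triangle_ineq4[of "f x" "s i x"] by simp
    qed
  qed (use f in auto)
  with simple fin show ?thesis by (intro that) auto
qed

text \<open>Unlike the library's \<open>has_integral_integral_lborel\<close>, the codomain need not be Euclidean:
  both integrals of f lie within \<open>\<integral>\<parallel>f - s\<^sub>i\<parallel>\<close> of the common integral of an integrable simple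
  function \<open>s\<^sub>i\<close>.\<close>
lemma has_integral_eq_integral_lborel:
  fixes f :: "real \<Rightarrow> 'b::{banach, second_countable_topology}"
  assumes f: "integrable lborel f" and I: "(f has_integral I) UNIV"
  shows "I = integral\<^sup>L lborel f"
proof -
  obtain s where simple: "\<And>i. simple_function lborel (s i)"
      and fin: "\<And>i. emeasure lborel {y \<in> space lborel. s i y \<noteq> 0} \<noteq> \<infinity>"
      and err: "(\<lambda>i. \<integral>x. norm (f x - s i x) \<partial>lborel) \<longlonglongrightarrow> 0"
    using integrable_simple_function_approximation[OF f] by blast
  have dist_le: "norm (I - integral\<^sup>L lborel f) \<le> 2 * (\<integral>x. norm (f x - s i x) \<partial>lborel)" for i
  proof -
    have si: "integrable lborel (s i)"
      using simple fin by (rule integrable_simple_function)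
    have diff: "((\<lambda>x. f x - s i x) has_integral (I - integral\<^sup>L lborel (s i))) UNIV"
      using I simple_function_has_integral_lborel[OF simple fin] by (rule has_integral_diff)
    have "integrable lborel (\<lambda>x. norm (f x - s i x))"
      using f si by auto
    then have norm_int: "((\<lambda>x. norm (f x - s i x)) has_integral (\<integral>x. norm (f x - s i x) \<partial>lborel)) UNIV"
      by (rule has_integral_integral_lborel)
    have HK: "norm (I - integral\<^sup>L lborel (s i)) \<le> (\<integral>x. norm (f x - s i x) \<partial>lborel)"
      using integral_norm_bound_integral[of "\<lambda>x. f x - s i x" UNIV "\<lambda>x. norm (f x - s i x)"]
        diff norm_int by (auto simp: integral_unique integrable_on_def)
    have "norm (integral\<^sup>L lborel (s i) - integral\<^sup>L lborel f) = norm (\<integral>x. f x - s i x \<partial>lborel)"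
      using f si by (simp add: norm_minus_commute)
    also have "\<dots> \<le> (\<integral>x. norm (f x - s i x) \<partial>lborel)"
      by (rule integral_norm_bound)
    finally show ?thesis
      using HK norm_triangle_ineq[of "I - integral\<^sup>L lborel (s i)" "integral\<^sup>L lborel (s i) - integral\<^sup>L lborel f"]
      by simp
  qed
  have "norm (I - integral\<^sup>L lborel f) \<le> 0"
    by (rule tendsto_lowerbound[OF tendsto_mult_right_zero[OF err, of 2]]) (use dist_le in auto)
  then show ?thesis by simp
qed

lemma integral_FTC_Icc_lborel:
  fixes F f :: "real \<Rightarrow> 'b::{banach, second_countable_topology}"
  assumes "a \<le> b"
    and deriv: "\<And>x. x \<in> {a..b} \<Longrightarrow> (F has_vector_derivative f x) (at x within {a..b})"
    and int: "set_integrable lborel {a..b} f"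
  shows "(LINT x:{a..b}|lborel. f x) = F b - F a"
proof -
  have "(f has_integral (F b - F a)) {a..b}"
    using \<open>a \<le> b\<close> deriv by (rule fundamental_theorem_of_calculus)
  then have "((\<lambda>x. indicator {a..b} x *\<^sub>R f x) has_integral (F b - F a)) UNIV"
    unfolding indicator_scaleR_eq_if by (simp only: has_integral_restrict_UNIV)
  with int show ?thesis
    unfolding set_integrable_def set_lebesgue_integral_def
    by (metis has_integral_eq_integral_lborel)
qed

lemma has_vector_derivative_iff_quotient:
  "(f has_vector_derivative D) (at x within S) \<longleftrightarrow>
    ((\<lambda>y. (1 / (y - x)) *\<^sub>R (f y - f x)) \<longlongrightarrow> D) (at x within S)"
proof -
  have "norm (f y - f x - (y - x) *\<^sub>R D) / norm (y - x) = norm ((1 / (y - x)) *\<^sub>R (f y - f x) - D)"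
    if "y \<noteq> x" for y
  proof -
    have "(1 / (y - x)) *\<^sub>R (f y - f x) - D = (1 / (y - x)) *\<^sub>R (f y - f x - (y - x) *\<^sub>R D)"
      using that by (simp add: scaleR_diff_right)
    then show ?thesis by (simp add: divide_inverse ac_simps)
  qed
  then have "((\<lambda>y. norm (f y - f x - (y - x) *\<^sub>R D) / norm (y - x)) \<longlongrightarrow> 0) (at x within S) \<longleftrightarrow>
      ((\<lambda>y. norm ((1 / (y - x)) *\<^sub>R (f y - f x) - D)) \<longlongrightarrow> 0) (at x within S)"
    by (intro filterlim_cong refl) (auto simp: eventually_at_filter)
  then show ?thesis
    by (simp add: has_vector_derivative_def has_derivative_iff_norm bounded_linear_scaleR_left
        tendsto_norm_zero_iff LIM_zero_iff)
qed

lemma tendsto_left_quotient_sequence: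
  fixes F :: "real \<Rightarrow> 'b::real_normed_vector"
  assumes deriv: "(F has_vector_derivative D) (at x within S)"
    and left: "eventually (\<lambda>n. x - inverse (real (Suc n)) \<in> S) sequentially"
  shows "(\<lambda>n. real (Suc n) *\<^sub>R (F x - F (x - inverse (real (Suc n))))) \<longlonglongrightarrow> D"
proof -
  define y where "y n = x - inverse (real (Suc n))" for n
  have "y \<longlonglongrightarrow> x - 0"
    unfolding y_def by (intro tendsto_diff tendsto_const LIMSEQ_inverse_real_of_nat)
  moreover have "eventually (\<lambda>n. y n \<in> S \<and> y n \<noteq> x) sequentially"
    using left by eventually_elim (simp add: y_def)
  ultimately have "filterlim y (at x within S) sequentially"
    by (simp add: filterlim_at)
  then have "(\<lambda>n. (1 / (y n - x)) *\<^sub>R (F (y n) - F x)) \<longlonglongrightarrow> D"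
    using deriv[unfolded has_vector_derivative_iff_quotient] by (rule filterlim_compose[rotated])
  moreover have "(1 / (y n - x)) *\<^sub>R (F (y n) - F x) = real (Suc n) *\<^sub>R (F x - F (y n))" for n
  proof -
    have "1 / (y n - x) = - real (Suc n)"
      by (simp add: y_def inverse_eq_divide)
    then show ?thesis
      by (metis minus_diff_eq scaleR_minus_left scaleR_minus_right)
  qed
  ultimately show ?thesis
    by (simp add: y_def)
qed

text \<open>On \<open>{a<..b}\<close>, D is the pointwise limit of the (continuous) left difference quotients of the
  extension \<open>G v = F (max a (min b v))\<close> of F to the whole line.\<close>
lemma borel_measurable_vector_derivative_Icc:
  fixes F D :: "real \<Rightarrow> 'b::{real_normed_vector, second_countable_topology}"
  assumes "a \<le> b"
    and deriv: "\<And>x. x \<in> {a..b} \<Longrightarrow> (F has_vector_derivative D x) (at x within {a..b})"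
  shows "(\<lambda>x. indicator {a..b} x *\<^sub>R D x) \<in> borel_measurable borel"
proof -
  define G where "G v = F (max a (min b v))" for v
  define Q where "Q n x = real (Suc n) *\<^sub>R (G x - G (x - inverse (real (Suc n))))" for n x
  have "continuous_on {a..b} F"
    unfolding continuous_on_eq_continuous_within using deriv has_vector_derivative_continuous by blast
  then have contG: "continuous_on UNIV G"
    unfolding G_def by (rule continuous_on_compose2) (auto intro!: continuous_intros simp: \<open>a \<le> b\<close>)
  have "continuous_on UNIV (\<lambda>x. G (x - c))" for c
    by (rule continuous_on_compose2[OF contG]) (auto intro: continuous_on_diff continuous_on_id continuous_on_const)
  then have "continuous_on UNIV (Q n)" for n
    unfolding Q_def by (intro continuous_on_scaleR continuous_on_const continuous_on_diff contG)
  then have "(\<lambda>x. indicator {a<..b} x *\<^sub>R Q n x) \<in> borel_measurable borel" for n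
    by (intro borel_measurable_scaleR borel_measurable_indicator borel_measurable_continuous_onI) auto
  moreover have "(\<lambda>n. indicator {a<..b} x *\<^sub>R Q n x) \<longlonglongrightarrow> indicator {a<..b} x *\<^sub>R D x" for x
  proof (cases "x \<in> {a<..b}")
    case True
    have "(\<lambda>n. x - inverse (real (Suc n))) \<longlonglongrightarrow> x - 0"
      by (intro tendsto_diff tendsto_const LIMSEQ_inverse_real_of_nat)
    then have "eventually (\<lambda>n. a < x - inverse (real (Suc n))) sequentially"
      using True by (intro order_tendstoD(1)) auto
    then have left: "eventually (\<lambda>n. x - inverse (real (Suc n)) \<in> {a..b}) sequentially"
    proof (rule eventually_mono)
      fix n :: nat
      assume "a < x - inverse (real (Suc n))"
      moreover have "0 < inverse (real (Suc n))" by simp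
      ultimately show "x - inverse (real (Suc n)) \<in> {a..b}"
        using True unfolding atLeastAtMost_iff greaterThanAtMost_iff by linarith
    qed
    have "(\<lambda>n. real (Suc n) *\<^sub>R (F x - F (x - inverse (real (Suc n))))) \<longlonglongrightarrow> D x"
      using True by (intro tendsto_left_quotient_sequence[OF deriv left]) auto
    moreover have "eventually (\<lambda>n. real (Suc n) *\<^sub>R (F x - F (x - inverse (real (Suc n)))) = Q n x) sequentially"
      using left by eventually_elim (use True in \<open>simp add: Q_def G_def\<close>)
    ultimately show ?thesis
      using True by (simp add: tendsto_cong)
  qed simp
  ultimately have "(\<lambda>x. indicator {a<..b} x *\<^sub>R D x) \<in> borel_measurable borel"
    by (rule borel_measurable_LIMSEQ_metric)
  moreover have "(\<lambda>x. indicator {a..b} x *\<^sub>R D x) = (\<lambda>x. indicator {a<..b} x *\<^sub>R D x + indicator {a} x *\<^sub>R D a)"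
    using \<open>a \<le> b\<close> by (auto simp: fun_eq_iff indicator_def)
  ultimately show ?thesis
    by simp
qed

lemma set_integrable_vector_derivative_Icc:
  fixes F D :: "real \<Rightarrow> 'b::{banach, second_countable_topology}"
  assumes "a \<le> b"
    and deriv: "\<And>x. x \<in> {a..b} \<Longrightarrow> (F has_vector_derivative D x) (at x within {a..b})"
    and w: "set_integrable lborel {a..b} w" and bound: "\<And>x. x \<in> {a..b} \<Longrightarrow> norm (D x) \<le> w x"
  shows "set_integrable lborel {a..b} D"
proof (rule set_integrable_bound[OF w])
  show "set_borel_measurable lborel {a..b} D"
    using borel_measurable_vector_derivative_Icc[OF \<open>a \<le> b\<close> deriv]
    unfolding set_borel_measurable_def by simp
  show "AE x in lborel. x \<in> {a..b} \<longrightarrow> norm (D x) \<le> norm (w x)"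
    using bound by (auto intro: order_trans[OF _ abs_ge_self])
qed

lemma norm_blinfun_le_of_bounded_on_ball:
  fixes T :: "'a::real_normed_vector \<Rightarrow>\<^sub>L 'b::real_normed_vector"
  assumes "r > 0" and bound: "\<And>y. y \<in> ball x0 r \<Longrightarrow> norm (T y) \<le> c"
  shows "norm T \<le> 4 * c / r"
proof (rule norm_blinfun_bound)
  have "norm (T x0) \<le> c"
    using \<open>r > 0\<close> by (intro bound) simp
  then have "0 \<le> c"
    using norm_ge_zero order_trans by blast
  then show "0 \<le> 4 * c / r"
    using \<open>r > 0\<close> by simp
  fix x :: 'a
  show "norm (T x) \<le> 4 * c / r * norm x"
  proof (cases "x = 0")
    case False
    define k where "k = r / (2 * norm x)"
    have "k > 0" "norm (k *\<^sub>R x) = r / 2"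
      using False \<open>r > 0\<close> by (simp_all add: k_def)
    then have "norm (T (x0 + k *\<^sub>R x)) \<le> c"
      using \<open>r > 0\<close> by (intro bound) (simp add: dist_norm)
    then have "k * norm (T x) \<le> 2 * c"
      using \<open>norm (T x0) \<le> c\<close> \<open>k > 0\<close> norm_triangle_ineq4[of "T (x0 + k *\<^sub>R x)" "T x0"]
      by (simp add: blinfun.add_right blinfun.scaleR_right)
    then show ?thesis
      using False \<open>r > 0\<close> by (simp add: k_def field_simps)
  qed simp
qed

text \<open>Baire's theorem applied to the closed sets \<open>{x. \<forall>i\<in>K. \<parallel>T i x\<parallel> \<le> n}\<close>, which cover the space.\<close>
lemma blinfun_uniform_boundedness:
  fixes T :: "'i \<Rightarrow> 'a::banach \<Rightarrow>\<^sub>L 'b::real_normed_vector"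
  assumes pointwise: "\<And>x. \<exists>B. \<forall>i\<in>K. norm (T i x) \<le> B"
  shows "\<exists>M. \<forall>i\<in>K. norm (T i) \<le> M"
proof -
  define E where "E n = (\<Inter>i\<in>K. {x. norm (T i x) \<le> real n})" for n :: nat
  have closed: "closed (E n)" for n
    unfolding E_def by (intro closed_INT ballI closed_Collect_le continuous_intros)
  have "(\<Union>n. E n) = UNIV"
  proof (intro set_eqI iffI UNIV_I)
    fix x :: 'a
    obtain B where "\<forall>i\<in>K. norm (T i x) \<le> B"
      using pointwise by blast
    moreover obtain n :: nat where "B \<le> real n"
      using real_arch_simple by blast
    ultimately have "x \<in> E n"
      unfolding E_def by force
    then show "x \<in> (\<Union>n. E n)" by blast
  qed
  then have "\<exists>n. interior (E n) \<noteq> {}"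
  proof (rule contrapos_pp)
    assume "\<not> (\<exists>n. interior (E n) \<noteq> {})"
    then have "\<And>S. S \<in> range E \<Longrightarrow> closedin euclidean S \<and> euclidean interior_of S = {}"
      using closed by (auto simp: closed_closedin[symmetric] euclidean_interior_of)
    then have "euclidean interior_of (\<Union>n. E n) = {}"
      by (intro Baire_category_alt) (auto simp: completely_metrizable_space_euclidean)
    then show "(\<Union>n. E n) \<noteq> UNIV"
      by (auto simp: euclidean_interior_of)
  qed
  then obtain n x0 r where "r > 0" "ball x0 r \<subseteq> E n"
    by (metis equals0I open_contains_ball open_interior interior_subset subset_trans)
  then have "norm (T i) \<le> 4 * real n / r" if "i \<in> K" for i
    using that by (intro norm_blinfun_le_of_bounded_on_ball) (auto simp: E_def)
  then show ?thesis
    by blast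
qed

lemma admissible_J_Icc_subset:
  assumes "admissible_J J" "s \<in> J" "t \<in> J"
  shows "{s..t} \<subseteq> J"
  using assms unfolding admissible_J_def by auto

lemma inhom_semigroup_apply:
  assumes "inhom_semigroup J \<Gamma>" "a \<in> J" "b \<in> J" "c \<in> J" "a \<le> b" "b \<le> c"
  shows "\<Gamma> a b (\<Gamma> b c x) = \<Gamma> a c x"
  using assms unfolding inhom_semigroup_def by (metis blinfun_apply_blinfun_compose)

lemma gen_limit_gen: "f \<in> gen_dom J \<Gamma> t \<Longrightarrow> gen_limit J \<Gamma> t f (gen J \<Gamma> t f)"
  unfolding gen_dom_def gen_def by (auto intro: someI_ex)

lemma strongly_t_continuous_on_Icc:
  assumes "strongly_t_continuous J \<Gamma>" "s \<in> J" "{s..t} \<subseteq> J"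
  shows "continuous_on {s..t} (\<lambda>u. \<Gamma> s u x)"
proof -
  have "continuous_on {u \<in> J. s \<le> u} (\<lambda>u. \<Gamma> s u x)"
    using assms unfolding strongly_t_continuous_def by blast
  then show ?thesis
    by (rule continuous_on_subset) (use assms in auto)
qed

lemma strongly_t_continuous_norm_bounded:
  fixes \<Gamma> :: "real \<Rightarrow> real \<Rightarrow> 'y::banach \<Rightarrow>\<^sub>L 'y"
  assumes "strongly_t_continuous J \<Gamma>" "s \<in> J" "{s..t} \<subseteq> J"
  obtains M where "\<And>u. u \<in> {s..t} \<Longrightarrow> norm (\<Gamma> s u) \<le> M"
proof -
  have "bounded ((\<lambda>u. \<Gamma> s u x) ` {s..t})" for x
    using assms by (intro compact_imp_bounded compact_continuous_image strongly_t_continuous_on_Icc) auto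
  then have "\<exists>B. \<forall>u\<in>{s..t}. norm (\<Gamma> s u x) \<le> B" for x
    unfolding bounded_iff by blast
  then show ?thesis
    using blinfun_uniform_boundedness[where T = "\<Gamma> s" and K = "{s..t}"] that by blast
qed

lemma inhom_semigroup_right_quotient:
  assumes semi: "inhom_semigroup J \<Gamma>" and "s \<in> J" "u \<in> J" "s \<le> u"
    and lim: "((\<lambda>h. (1 / h) *\<^sub>R (\<Gamma> u (u + h) f - f)) \<longlongrightarrow> L) (at 0 within {h. 0 < h \<and> u + h \<in> J})"
  shows "((\<lambda>y. (1 / (y - u)) *\<^sub>R (\<Gamma> s y f - \<Gamma> s u f)) \<longlongrightarrow> \<Gamma> s u L) (at u within {y \<in> J. u < y})"
proof -
  have "((\<lambda>y. y - u) \<longlongrightarrow> u - u) (at u within {y \<in> J. u < y})"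
    by (intro tendsto_intros)
  moreover have "eventually (\<lambda>y. y - u \<in> {h. 0 < h \<and> u + h \<in> J} \<and> y - u \<noteq> 0) (at u within {y \<in> J. u < y})"
    by (auto simp: eventually_at_filter)
  ultimately have "filterlim (\<lambda>y. y - u) (at 0 within {h. 0 < h \<and> u + h \<in> J}) (at u within {y \<in> J. u < y})"
    by (simp add: filterlim_at)
  from filterlim_compose[OF lim this]
  have "((\<lambda>y. (1 / (y - u)) *\<^sub>R (\<Gamma> u y f - f)) \<longlongrightarrow> L) (at u within {y \<in> J. u < y})"
    by simp
  then have "((\<lambda>y. \<Gamma> s u ((1 / (y - u)) *\<^sub>R (\<Gamma> u y f - f))) \<longlongrightarrow> \<Gamma> s u L) (at u within {y \<in> J. u < y})"
    by (rule bounded_linear.tendsto[OF blinfun.bounded_linear_right])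
  moreover have "eventually (\<lambda>y. \<Gamma> s u ((1 / (y - u)) *\<^sub>R (\<Gamma> u y f - f)) = (1 / (y - u)) *\<^sub>R (\<Gamma> s y f - \<Gamma> s u f))
      (at u within {y \<in> J. u < y})"
  proof (rule eventually_at_filter[THEN iffD2], intro always_eventually allI impI)
    fix y assume "y \<in> {y \<in> J. u < y}"
    then have "\<Gamma> s u (\<Gamma> u y f) = \<Gamma> s y f"
      using assms by (intro inhom_semigroup_apply) auto
    then show "\<Gamma> s u ((1 / (y - u)) *\<^sub>R (\<Gamma> u y f - f)) = (1 / (y - u)) *\<^sub>R (\<Gamma> s y f - \<Gamma> s u f)"
      by (simp add: blinfun.scaleR_right blinfun.diff_right)
  qed
  ultimately show ?thesis
    using tendsto_cong by fastforce
qed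

text \<open>Writing \<open>p h\<close> for the left difference quotient of \<open>\<Gamma>(\<cdot>,u)f\<close>, the left difference quotient
  at \<open>y = u - h\<close> is \<open>\<Gamma>(s,y)(p h - L) + \<Gamma>(s,y)L\<close>: the first term vanishes since
  \<open>\<Gamma>(s,\<cdot>)\<close> is bounded, the second tends to \<open>\<Gamma>(s,u)L\<close> by strong continuity.\<close>
lemma inhom_semigroup_left_quotient:
  assumes semi: "inhom_semigroup J \<Gamma>" and sub: "{s..u} \<subseteq> J" and "s \<le> u"
    and bound: "\<And>y. y \<in> {s..u} \<Longrightarrow> norm (\<Gamma> s y) \<le> M"
    and cont: "continuous_on {s..u} (\<lambda>y. \<Gamma> s y L)"
    and lim: "((\<lambda>h. (1 / h) *\<^sub>R (\<Gamma> (u - h) u f - f)) \<longlongrightarrow> L) (at 0 within {h. 0 < h \<and> u - h \<in> J})"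
  shows "((\<lambda>y. (1 / (y - u)) *\<^sub>R (\<Gamma> s y f - \<Gamma> s u f)) \<longlongrightarrow> \<Gamma> s u L) (at u within {s..<u})"
proof -
  define p where "p h = (1 / h) *\<^sub>R (\<Gamma> (u - h) u f - f)" for h
  have "((\<lambda>y. u - y) \<longlongrightarrow> u - u) (at u within {s..<u})"
    by (intro tendsto_intros)
  moreover have "eventually (\<lambda>y. u - y \<in> {h. 0 < h \<and> u - h \<in> J} \<and> u - y \<noteq> 0) (at u within {s..<u})"
    using sub by (auto simp: eventually_at_filter intro!: always_eventually)
  ultimately have "filterlim (\<lambda>y. u - y) (at 0 within {h. 0 < h \<and> u - h \<in> J}) (at u within {s..<u})"
    by (simp add: filterlim_at)
  from filterlim_compose[OF lim[folded p_def] this]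
  have quotient_error: "((\<lambda>y. norm (p (u - y) - L)) \<longlongrightarrow> 0) (at u within {s..<u})"
    by (intro tendsto_norm_zero LIM_zero)
  have "eventually (\<lambda>y. norm (\<Gamma> s y (p (u - y) - L)) \<le> M * norm (p (u - y) - L))
      (at u within {s..<u})"
  proof (rule eventually_at_filter[THEN iffD2], intro always_eventually allI impI)
    fix y assume "y \<in> {s..<u}"
    then have "norm (\<Gamma> s y) * norm (p (u - y) - L) \<le> M * norm (p (u - y) - L)"
      by (intro mult_right_mono bound) auto
    then show "norm (\<Gamma> s y (p (u - y) - L)) \<le> M * norm (p (u - y) - L)"
      using norm_blinfun[of "\<Gamma> s y" "p (u - y) - L"] by linarith
  qed
  then have small: "((\<lambda>y. \<Gamma> s y (p (u - y) - L)) \<longlongrightarrow> 0) (at u within {s..<u})"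
    by (rule Lim_null_comparison[OF _ tendsto_mult_right_zero[OF quotient_error]])
  have "((\<lambda>y. \<Gamma> s y L) \<longlongrightarrow> \<Gamma> s u L) (at u within {s..u})"
    using cont \<open>s \<le> u\<close> unfolding continuous_on_def by auto
  then have "((\<lambda>y. \<Gamma> s y L) \<longlongrightarrow> \<Gamma> s u L) (at u within {s..<u})"
    by (rule tendsto_within_subset) auto
  with small have "((\<lambda>y. \<Gamma> s y (p (u - y) - L) + \<Gamma> s y L) \<longlongrightarrow> 0 + \<Gamma> s u L) (at u within {s..<u})"
    by (rule tendsto_add)
  moreover have "eventually (\<lambda>y. \<Gamma> s y (p (u - y) - L) + \<Gamma> s y L = (1 / (y - u)) *\<^sub>R (\<Gamma> s y f - \<Gamma> s u f))
      (at u within {s..<u})"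
  proof (rule eventually_at_filter[THEN iffD2], intro always_eventually allI impI)
    fix y assume "y \<in> {s..<u}"
    then have "\<Gamma> s u f = \<Gamma> s y (\<Gamma> y u f)"
      using sub by (intro inhom_semigroup_apply[OF semi, symmetric]) auto
    moreover have "(1 / (u - y)) *\<^sub>R (a - b) = (1 / (y - u)) *\<^sub>R (b - a)" for a b :: 'a
    proof -
      have "1 / (y - u) = - (1 / (u - y))"
        by (metis divide_minus_right minus_diff_eq)
      then show ?thesis
        by (simp add: scaleR_diff_right)
    qed
    ultimately show "\<Gamma> s y (p (u - y) - L) + \<Gamma> s y L = (1 / (y - u)) *\<^sub>R (\<Gamma> s y f - \<Gamma> s u f)"
      by (simp add: p_def blinfun.scaleR_right blinfun.diff_right)
  qed
  ultimately show ?thesis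
    using tendsto_cong by fastforce
qed

lemma inhom_semigroup_orbit_has_vector_derivative:
  fixes \<Gamma> :: "real \<Rightarrow> real \<Rightarrow> 'y::banach \<Rightarrow>\<^sub>L 'y"
  assumes semi: "inhom_semigroup J \<Gamma>" and cont: "strongly_t_continuous J \<Gamma>"
    and sub: "{s..t} \<subseteq> J" and u: "u \<in> {s..t}" and L: "gen_limit J \<Gamma> u f L"
  shows "((\<lambda>v. \<Gamma> s v f) has_vector_derivative \<Gamma> s u L) (at u within {s..t})"
proof -
  have "s \<in> J" "u \<in> J" "{s..u} \<subseteq> J"
    using sub u by auto
  obtain M where M: "\<And>y. y \<in> {s..t} \<Longrightarrow> norm (\<Gamma> s y) \<le> M"
    using strongly_t_continuous_norm_bounded[OF cont \<open>s \<in> J\<close> sub] by blast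
  have "((\<lambda>y. (1 / (y - u)) *\<^sub>R (\<Gamma> s y f - \<Gamma> s u f)) \<longlongrightarrow> \<Gamma> s u L) (at u within {y \<in> J. u < y})"
    using L u \<open>s \<in> J\<close> \<open>u \<in> J\<close> unfolding gen_limit_def
    by (intro inhom_semigroup_right_quotient[OF semi]) auto
  then have right: "((\<lambda>y. (1 / (y - u)) *\<^sub>R (\<Gamma> s y f - \<Gamma> s u f)) \<longlongrightarrow> \<Gamma> s u L) (at u within {u<..t})"
    by (rule tendsto_within_subset) (use sub u in auto)
  have left: "((\<lambda>y. (1 / (y - u)) *\<^sub>R (\<Gamma> s y f - \<Gamma> s u f)) \<longlongrightarrow> \<Gamma> s u L) (at u within {s..<u})"
  proof (rule inhom_semigroup_left_quotient[OF semi \<open>{s..u} \<subseteq> J\<close>, where M = M])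
    show "continuous_on {s..u} (\<lambda>y. \<Gamma> s y L)"
      using strongly_t_continuous_on_Icc[OF cont \<open>s \<in> J\<close> \<open>{s..u} \<subseteq> J\<close>] .
    show "((\<lambda>h. (1 / h) *\<^sub>R (\<Gamma> (u - h) u f - f)) \<longlongrightarrow> L) (at 0 within {h. 0 < h \<and> u - h \<in> J})"
      using L unfolding gen_limit_def by blast
  qed (use u M in auto)
  have "at u within {s..t} = at u within ({s..<u} \<union> {u<..t})"
    using u by (auto simp: at_within_def intro!: arg_cong[where f = "inf (nhds u)"])
  with Lim_Un[OF left right] show ?thesis
    by (simp add: has_vector_derivative_iff_quotient)
qed

theorem theorem2p8:
  fixes J :: "real set"
    and \<Gamma> :: "real \<Rightarrow> real \<Rightarrow> ('y::{banach, second_countable_topology} \<Rightarrow>\<^sub>L 'y)"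
    and \<iota> :: "'z::{banach, second_countable_topology} \<Rightarrow> 'y"
  assumes J: "admissible_J J"
    and emb: "bounded_linear \<iota>" "inj \<iota>"
    and semi: "inhom_semigroup J \<Gamma>"
    and dom: "range \<iota> \<subseteq> gen_dom_all J \<Gamma>"
    and cont: "strongly_t_continuous J \<Gamma>"
    and bdd: "\<And>t. t \<in> J \<Longrightarrow> bounded_linear (\<lambda>g. gen J \<Gamma> t (\<iota> g))"
    and L1: "\<And>s t. s \<in> J \<Longrightarrow> t \<in> J \<Longrightarrow> s \<le> t \<Longrightarrow>
               set_integrable lborel {s..t} (\<lambda>u. onorm (\<lambda>g. gen J \<Gamma> u (\<iota> g)))"
  shows "\<forall>g s t. s \<in> J \<longrightarrow> t \<in> J \<longrightarrow> s \<le> t \<longrightarrow>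
           set_integrable lborel {s..t} (\<lambda>u. blinfun_apply (\<Gamma> s u) (gen J \<Gamma> u (\<iota> g))) \<and>
           blinfun_apply (\<Gamma> s t) (\<iota> g) - \<iota> g
             = (LINT u:{s..t}|lborel. blinfun_apply (\<Gamma> s u) (gen J \<Gamma> u (\<iota> g)))"
proof (intro allI impI)
  fix g s t assume "s \<in> J" "t \<in> J" "s \<le> t"
  have sub: "{s..t} \<subseteq> J"
    using J \<open>s \<in> J\<close> \<open>t \<in> J\<close> by (rule admissible_J_Icc_subset)
  let ?D = "\<lambda>u. \<Gamma> s u (gen J \<Gamma> u (\<iota> g))"
  have deriv: "((\<lambda>v. \<Gamma> s v (\<iota> g)) has_vector_derivative ?D u) (at u within {s..t})" if "u \<in> {s..t}" for u
  proof -
    have "\<iota> g \<in> gen_dom J \<Gamma> u"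
      using dom sub that unfolding gen_dom_all_def by blast
    then show ?thesis
      by (intro inhom_semigroup_orbit_has_vector_derivative[OF semi cont sub that] gen_limit_gen)
  qed
  obtain M where M: "\<And>u. u \<in> {s..t} \<Longrightarrow> norm (\<Gamma> s u) \<le> M"
    using strongly_t_continuous_norm_bounded[OF cont \<open>s \<in> J\<close> sub] by blast
  have bound: "norm (?D u) \<le> M * norm g * onorm (\<lambda>g. gen J \<Gamma> u (\<iota> g))" if "u \<in> {s..t}" for u
  proof -
    have "norm (?D u) \<le> M * (onorm (\<lambda>g. gen J \<Gamma> u (\<iota> g)) * norm g)"
      using M[OF that] order_trans[OF norm_ge_zero M[OF that]] onorm[OF bdd, of u g] sub that
      by (intro order_trans[OF norm_blinfun] mult_mono) auto
    then show ?thesis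
      by (simp add: mult_ac)
  qed
  have majorant: "set_integrable lborel {s..t} (\<lambda>u. M * norm g * onorm (\<lambda>g. gen J \<Gamma> u (\<iota> g)))"
    using L1[OF \<open>s \<in> J\<close> \<open>t \<in> J\<close> \<open>s \<le> t\<close>] by (rule set_integrable_mult_right)
  have "set_integrable lborel {s..t} ?D"
    by (rule set_integrable_vector_derivative_Icc[where F = "\<lambda>v. \<Gamma> s v (\<iota> g)"])
      (use \<open>s \<le> t\<close> deriv majorant bound in auto)
  moreover have "(LINT u:{s..t}|lborel. ?D u) = \<Gamma> s t (\<iota> g) - \<Gamma> s s (\<iota> g)"
    using \<open>s \<le> t\<close> deriv calculation by (rule integral_FTC_Icc_lborel)
  ultimately show "set_integrable lborel {s..t} ?D \<and> \<Gamma> s t (\<iota> g) - \<iota> g = (LINT u:{s..t}|lborel. ?D u)"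
    using semi \<open>s \<in> J\<close> unfolding inhom_semigroup_def by simp
qed

end
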